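(* For every set $P$ of $n\ge 3$ points in general position, the $\Theta_6$ graph of $P$ has at most $5n-11$ edges.
   Context: A finite point set $P$ in the plane is in general position if no line through two points of $P$ makes an angle of $0^\circ$, $60^\circ$ or $120^\circ$ with the horizontal. For a point $p$, let $A_i(p)$ ($i=1,\dots,6$) be the closed cone with apex $p$ between the rays from $p$ at angles $(i-1)\pi/3$ and $i\pi/3$ measured counter-clockwise from the positive $x$-axis. The $\Theta_6$ graph of $P$ has vertex set $P$, and for each $p\in P$ and each $i\in\{1,\dots,6\}$ with $A_i(p)\cap(P\setminus\{p\})\neq\emptyset$, it contains the edge $pq$, where $q$ is the point of $A_i(p)\cap(P\setminus\{p\})$ whose orthogonal projection onto the bisector of $A_i(p)$ is nearest to $p$ (this point is unique by general position). *)

theory Defs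
  imports Complex_Main
begin

type_synonym point = "real \<times> real"

definition ray_dir :: "nat \<Rightarrow> point" where
  "ray_dir k = (cos (real k * pi / 3), sin (real k * pi / 3))"

definition bisector_dir :: "nat \<Rightarrow> point" where
  "bisector_dir i = (cos ((2 * real i - 1) * pi / 6), sin ((2 * real i - 1) * pi / 6))"

definition cone :: "nat \<Rightarrow> point \<Rightarrow> point set" where
  "cone i p = {q. \<exists>a b. a \<ge> 0 \<and> b \<ge> 0 \<and>
      q = (fst p + a * fst (ray_dir (i - 1)) + b * fst (ray_dir i),
           snd p + a * snd (ray_dir (i - 1)) + b * snd (ray_dir i))}"

definition proj_dist :: "nat \<Rightarrow> point \<Rightarrow> point \<Rightarrow> real" where
  "proj_dist i p q = (fst q - fst p) * fst (bisector_dir i) + (snd q - snd p) * snd (bisector_dir i)"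

text \<open>General position: no line through two points has angle 0, 60 or 120 degrees
  with the horizontal, i.e. q - p is never parallel to ray_dir 0, 1, 2.\<close>
definition general_position :: "point set \<Rightarrow> bool" where
  "general_position P \<longleftrightarrow>
     (\<forall>p\<in>P. \<forall>q\<in>P. p \<noteq> q \<longrightarrow> (\<forall>k\<in>{0,1,2::nat}. \<forall>t::real.
        (fst q - fst p, snd q - snd p) \<noteq> (t * fst (ray_dir k), t * snd (ray_dir k))))"

definition theta6_edges :: "point set \<Rightarrow> point set set" where
  "theta6_edges P = {{p, q} | p q. p \<in> P \<and> (\<exists>i\<in>{1..6::nat}.
      q \<in> cone i p \<inter> (P - {p}) \<and>
      (\<forall>r \<in> cone i p \<inter> (P - {p}). proj_dist i p q \<le> proj_dist i p r))}"

end

theory Submission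
  imports Defs
begin

text \<open>Write \<open>hex_coord k q\<close> for the cross product of \<open>q\<close> with the \<open>k\<close>-th ray direction. In
  these coordinates the cone \<open>Suc k\<close> at \<open>p\<close> is an orthant, namely the points where
  \<open>hex_coord (Suc k)\<close> is at least and \<open>hex_coord k\<close> at most its value at \<open>p\<close>, and the
  projection onto its bisector is the increase of \<open>hex_coord (k + 2) = hex_coord (Suc k) - hex_coord k\<close>.
  So a point has an outgoing arc in a cone unless it is a maximal point of \<open>P\<close> for the two
  coordinates describing that cone. The cones \<open>1, 3, 5\<close> (and likewise \<open>2, 4, 6\<close>) use three
  coordinates summing to zero, and for such a triple there are at least six maximal points in
  total; hence there are at most \<open>6 n - 12\<close> arcs. A pair realising the minimum hexagonal distance
  across a cut of \<open>P\<close> is an arc in both directions, so the mutual arcs connect \<open>P\<close> and there are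
  at least \<open>n - 1\<close> of them. Each mutual pair gives a single edge, leaving at most
  \<open>6 n - 12 - (n - 1) = 5 n - 11\<close> edges.\<close>

section \<open>Maximal points\<close>

lemma ex_argmax:
  fixes f :: "'a \<Rightarrow> 'b::linorder"
  assumes "finite S" "S \<noteq> {}"
  obtains x where "x \<in> S" "\<forall>y\<in>S. f y \<le> f x"
proof -
  have "Max (f ` S) \<in> f ` S" using assms by simp
  then obtain x where "x \<in> S" "f x = Max (f ` S)" by auto
  then show thesis using that assms by simp
qed

definition maximal_points :: "'a set \<Rightarrow> ('a \<Rightarrow> 'b::linorder) \<Rightarrow> ('a \<Rightarrow> 'b) \<Rightarrow> 'a set" where
  "maximal_points P f g = {p \<in> P. \<forall>q\<in>P. q \<noteq> p \<longrightarrow> \<not> (f p \<le> f q \<and> g p \<le> g q)}"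

lemma maximal_points_commute: "maximal_points P f g = maximal_points P g f"
  unfolding maximal_points_def by auto

lemma maximal_points_subset: "maximal_points P f g \<subseteq> P"
  unfolding maximal_points_def by auto

lemma argmax_in_maximal_points:
  assumes "inj_on f P" "X \<in> P" "\<forall>q\<in>P. f q \<le> f X"
  shows "X \<in> maximal_points P f g"
  unfolding maximal_points_def
proof (intro CollectI conjI ballI impI notI)
  fix q assume "q \<in> P" "q \<noteq> X" "f X \<le> f q \<and> g X \<le> g q"
  then have "f q = f X" using assms(3) by (auto intro: order_antisym)
  then show False using inj_onD [OF assms(1)] \<open>q \<in> P\<close> \<open>q \<noteq> X\<close> assms(2) by blast
qed (rule assms(2))

lemma dominated_by_maximal_point:
  assumes "finite P" "inj_on f P" "W \<in> P"
  obtains q where "q \<in> maximal_points P f g" "f W \<le> f q" "g W \<le> g q"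
proof -
  let ?T = "{q \<in> P. f W \<le> f q \<and> g W \<le> g q}"
  obtain q where q: "q \<in> ?T" "\<forall>q'\<in>?T. f q' \<le> f q"
    using ex_argmax [of ?T f] assms by auto
  have "q \<in> maximal_points P f g"
    unfolding maximal_points_def
  proof (intro CollectI conjI ballI impI notI)
    fix q' assume "q' \<in> P" "q' \<noteq> q" "f q \<le> f q' \<and> g q \<le> g q'"
    then have "q' \<in> ?T" using q(1) by auto
    then have "f q' = f q" using q(2) \<open>f q \<le> f q' \<and> g q \<le> g q'\<close> by (auto intro: order_antisym)
    then show False using inj_onD [OF assms(2)] \<open>q' \<in> P\<close> \<open>q' \<noteq> q\<close> q(1) by blast
  qed (use q in simp)
  with q that show thesis by blast
qed

text \<open>The common maximizer \<open>X\<close> of \<open>x\<close> and \<open>y\<close> minimizes \<open>z\<close>. If both sets of maximal points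
  were just \<open>{X, Z}\<close> with \<open>Z\<close> the maximizer of \<open>z\<close>, a third point would be dominated by \<open>Z\<close> in all
  three coordinates, which is impossible as they sum to zero.\<close>
lemma card_maximal_points_common_argmax:
  fixes x y z :: "'a \<Rightarrow> real"
  assumes fin: "finite P" and three: "card P \<ge> 3" and sum0: "\<forall>p\<in>P. x p + y p + z p = 0"
    and inj: "inj_on x P" "inj_on y P" "inj_on z P"
    and X: "X \<in> P" "\<forall>q\<in>P. x q \<le> x X \<and> y q \<le> y X"
  shows "5 \<le> card (maximal_points P y z) + card (maximal_points P z x)"
proof -
  have X_below: "z X < z W" if "W \<in> P" "W \<noteq> X" for W
  proof -
    have "x W < x X" "y W < y X"
      using X that inj(1,2) by (metis inj_on_eq_iff order_less_le)+
    moreover have "x X + y X + z X = 0" "x W + y W + z W = 0" using sum0 X(1) that(1) by auto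
    ultimately show ?thesis by linarith
  qed
  have "P \<noteq> {}" using three by auto
  then obtain Z where Z: "Z \<in> P" "\<forall>q\<in>P. z q \<le> z Z"
    using ex_argmax [OF fin] by blast
  have "Z \<noteq> X"
  proof
    assume "Z = X"
    have "\<not> P \<subseteq> {X}" using card_mono [OF _ , of "{X}" P] three by auto
    then obtain W where "W \<in> P" "W \<noteq> X" by blast
    then show False using X_below Z \<open>Z = X\<close> by force
  qed
  have "X \<in> maximal_points P y z" "X \<in> maximal_points P x z"
    "Z \<in> maximal_points P z y" "Z \<in> maximal_points P z x"
    using argmax_in_maximal_points [OF inj(2) X(1)] argmax_in_maximal_points [OF inj(1) X(1)]
      argmax_in_maximal_points [OF inj(3) Z] X(2) by auto
  then have XZ_y: "{X, Z} \<subseteq> maximal_points P y z" and XZ_z: "{X, Z} \<subseteq> maximal_points P z x"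
    using maximal_points_commute [of P z y] maximal_points_commute [of P x z] by auto
  have fin_fronts: "finite (maximal_points P f g)" for f g :: "'a \<Rightarrow> real"
    using fin maximal_points_subset by (rule finite_subset [rotated])
  have "card {X, Z} = 2" using \<open>Z \<noteq> X\<close> by simp
  then have two: "2 \<le> card (maximal_points P y z)" "2 \<le> card (maximal_points P z x)"
    using card_mono [OF fin_fronts XZ_y] card_mono [OF fin_fronts XZ_z] by auto
  show ?thesis
  proof (rule ccontr)
    assume "\<not> ?thesis"
    then have "maximal_points P y z = {X, Z}" "maximal_points P z x = {X, Z}"
      using two card_subset_eq [OF fin_fronts XZ_y] card_subset_eq [OF fin_fronts XZ_z]
        \<open>card {X, Z} = 2\<close> by auto
    obtain W where W: "W \<in> P" "W \<noteq> X" "W \<noteq> Z"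
    proof -
      have "\<not> P \<subseteq> {X, Z}"
        using card_mono [of "{X, Z}" P] three \<open>card {X, Z} = 2\<close> by auto
      then show thesis using that by blast
    qed
    have "q = Z" if "q \<in> {X, Z}" "z W \<le> z q" for q
      using that X_below [OF W(1,2)] by auto
    then have "y W \<le> y Z" "z W \<le> z Z" "x W \<le> x Z"
      using dominated_by_maximal_point [OF fin inj(2) W(1), of z]
        dominated_by_maximal_point [OF fin inj(3) W(1), of x]
      by (metis \<open>maximal_points P y z = {X, Z}\<close> \<open>maximal_points P z x = {X, Z}\<close>)+
    moreover have "x W \<noteq> x Z" using inj(1) W Z(1) by (auto dest: inj_onD)
    moreover have "x W + y W + z W = 0" "x Z + y Z + z Z = 0" using sum0 W(1) Z(1) by auto
    ultimately show False by linarith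
  qed
qed

lemma card_maximal_points_cyclic_sum:
  fixes x y z :: "'a \<Rightarrow> real"
  assumes fin: "finite P" and three: "card P \<ge> 3" and sum0: "\<forall>p\<in>P. x p + y p + z p = 0"
    and inj: "inj_on x P" "inj_on y P" "inj_on z P"
  shows "6 \<le> card (maximal_points P x y) + card (maximal_points P y z) + card (maximal_points P z x)"
proof -
  have ne: "P \<noteq> {}" using three by auto
  obtain X where X: "X \<in> P" "\<forall>q\<in>P. x q \<le> x X" using ex_argmax [OF fin ne] by blast
  obtain Y where Y: "Y \<in> P" "\<forall>q\<in>P. y q \<le> y Y" using ex_argmax [OF fin ne] by blast
  obtain Z where Z: "Z \<in> P" "\<forall>q\<in>P. z q \<le> z Z" using ex_argmax [OF fin ne] by blast
  have fin_fronts: "finite (maximal_points P f g)" for f g :: "'a \<Rightarrow> real"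
    using fin maximal_points_subset by (rule finite_subset [rotated])
  have one: "1 \<le> card (maximal_points P f g)" if "V \<in> maximal_points P f g"
    for f g :: "'a \<Rightarrow> real" and V
    using that fin_fronts [of f g] by (auto simp: Suc_le_eq card_gt_0_iff)
  have two: "2 \<le> card (maximal_points P f g)"
    if "V \<in> maximal_points P f g" "V' \<in> maximal_points P f g" "V \<noteq> V'"
    for f g :: "'a \<Rightarrow> real" and V V'
    using that card_mono [OF fin_fronts, of "{V, V'}" f g] by auto
  have XM: "X \<in> maximal_points P x g" "X \<in> maximal_points P g x" for g :: "'a \<Rightarrow> real"
    using argmax_in_maximal_points [OF inj(1) X, of g]
    by (simp_all add: maximal_points_commute [of P g x])
  have YM: "Y \<in> maximal_points P y g" "Y \<in> maximal_points P g y" for g :: "'a \<Rightarrow> real"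
    using argmax_in_maximal_points [OF inj(2) Y, of g]
    by (simp_all add: maximal_points_commute [of P g y])
  have ZM: "Z \<in> maximal_points P z g" "Z \<in> maximal_points P g z" for g :: "'a \<Rightarrow> real"
    using argmax_in_maximal_points [OF inj(3) Z, of g]
    by (simp_all add: maximal_points_commute [of P g z])
  consider "X = Y" | "Y = Z" | "Z = X" | "X \<noteq> Y" "Y \<noteq> Z" "Z \<noteq> X" by blast
  then show ?thesis
  proof cases
    case 1
    then have "5 \<le> card (maximal_points P y z) + card (maximal_points P z x)"
      using card_maximal_points_common_argmax [OF fin three sum0 inj X(1)] X Y by auto
    then show ?thesis using one [OF XM(1) [of y]] by linarith
  next
    case 2
    then have "5 \<le> card (maximal_points P z x) + card (maximal_points P x y)"
      using card_maximal_points_common_argmax [of P y z x Y] fin three sum0 inj Y Z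
      by (auto simp: add_ac)
    then show ?thesis using one [OF YM(1) [of z]] by linarith
  next
    case 3
    then have "5 \<le> card (maximal_points P x y) + card (maximal_points P y z)"
      using card_maximal_points_common_argmax [of P z x y Z] fin three sum0 inj Z X
      by (auto simp: add_ac)
    then show ?thesis using one [OF ZM(1) [of x]] by linarith
  next
    case 4
    then show ?thesis
      using two [OF XM(1) YM(2)] two [OF YM(1) ZM(2)] two [OF ZM(1) XM(2)] by linarith
  qed
qed

lemma card_edges_ge_if_cuts_crossed:
  fixes E :: "'a set set"
  assumes fin: "finite V" "finite E"
    and cut: "\<And>S. S \<subseteq> V \<Longrightarrow> S \<noteq> {} \<Longrightarrow> V - S \<noteq> {} \<Longrightarrow> \<exists>p\<in>S. \<exists>q\<in>V - S. {p, q} \<in> E"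
  shows "card V - 1 \<le> card E"
proof -
  have grow: "\<exists>S\<subseteq>V. card S = Suc k \<and> k \<le> card {e \<in> E. e \<subseteq> S}" if "Suc k \<le> card V" for k
    using that
  proof (induction k)
    case 0
    then obtain p where "p \<in> V" by fastforce
    then show ?case by (intro exI [of _ "{p}"]) simp
  next
    case (Suc k)
    then obtain S where S: "S \<subseteq> V" "card S = Suc k" "k \<le> card {e \<in> E. e \<subseteq> S}" by auto
    have "V - S \<noteq> {}" using Suc.prems S(1,2) card_mono [OF fin(1)] by fastforce
    moreover have "S \<noteq> {}" using S(2) by auto
    ultimately obtain p q where pq: "p \<in> S" "q \<in> V - S" "{p, q} \<in> E" using cut [OF S(1)] by blast
    let ?S' = "insert q S"
    have "insert {p, q} {e \<in> E. e \<subseteq> S} \<subseteq> {e \<in> E. e \<subseteq> ?S'}" using pq by auto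
    then have "card (insert {p, q} {e \<in> E. e \<subseteq> S}) \<le> card {e \<in> E. e \<subseteq> ?S'}"
      using fin(2) by (intro card_mono) simp_all
    moreover have "{p, q} \<notin> {e \<in> E. e \<subseteq> S}" using pq(2) by auto
    ultimately have "Suc k \<le> card {e \<in> E. e \<subseteq> ?S'}" using S(3) fin(2) by simp
    moreover have "card ?S' = Suc (Suc k)" using pq(2) S(2) finite_subset [OF S(1) fin(1)] by simp
    ultimately show ?case using S(1) pq(2) by blast
  qed
  show ?thesis
  proof (cases "V = {}")
    case False
    then obtain S where "card {e \<in> E. e \<subseteq> S} \<ge> card V - 1"
      using grow [of "card V - 1"] fin(1) by (metis Suc_pred' card_gt_0_iff le_refl)
    then show ?thesis using card_mono [OF fin(2), of "{e \<in> E. e \<subseteq> S}"] by auto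
  qed simp
qed

lemma card_image_add_card_double_fibres:
  assumes fin: "finite X" and "M \<subseteq> f ` X"
    and double: "\<And>y. y \<in> M \<Longrightarrow> 2 \<le> card {x \<in> X. f x = y}"
  shows "card (f ` X) + card M \<le> card X"
proof -
  have "card M = (\<Sum>y\<in>f ` X. if y \<in> M then 1 else 0)"
    using sum.inter_restrict [of "f ` X" "\<lambda>_. 1 :: nat" M] fin \<open>M \<subseteq> f ` X\<close>
    by (simp add: Int_absorb1)
  then have "card (f ` X) + card M = (\<Sum>y\<in>f ` X. 1 + (if y \<in> M then 1 else 0))"
    unfolding sum.distrib by simp
  also have "\<dots> \<le> (\<Sum>y\<in>f ` X. card {x \<in> X. f x = y})"
  proof (rule sum_mono)
    fix y assume "y \<in> f ` X"
    then have "{x \<in> X. f x = y} \<noteq> {}" by auto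
    then have "1 \<le> card {x \<in> X. f x = y}" using fin by (simp add: Suc_le_eq card_gt_0_iff)
    then show "1 + (if y \<in> M then 1 else 0) \<le> card {x \<in> X. f x = y}" using double [of y] by auto
  qed
  also have "\<dots> = card X" using sum.image_gen [OF fin, of "\<lambda>_. 1 :: nat" f] by simp
  finally show ?thesis .
qed

section \<open>Hexagonal coordinates\<close>

lemma ray_dir_add3: "ray_dir (k + 3) = (- fst (ray_dir k), - snd (ray_dir k))"
proof -
  have e: "real (k + 3) * pi / 3 = real k * pi / 3 + pi" by (simp add: field_simps)
  show ?thesis unfolding ray_dir_def e by simp
qed

lemma ray_dir_Suc:
  "ray_dir (Suc k) = (fst (ray_dir k) + fst (ray_dir (k + 2)), snd (ray_dir k) + snd (ray_dir (k + 2)))"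
proof -
  define y where "y = real (Suc k) * pi / 3"
  have e: "real k * pi / 3 = y - pi / 3" "real (k + 2) * pi / 3 = y + pi / 3"
    by (simp_all add: y_def field_simps)
  show ?thesis
    unfolding ray_dir_def y_def [symmetric] e by (simp add: cos_add cos_diff sin_add sin_diff cos_60)
qed

lemma ray_dir_Suc_cross:
  "fst (ray_dir k) * snd (ray_dir (Suc k)) - snd (ray_dir k) * fst (ray_dir (Suc k)) = sqrt 3 / 2"
proof -
  have "real (Suc k) * pi / 3 - real k * pi / 3 = pi / 3" by (simp add: field_simps)
  then have "sin (real (Suc k) * pi / 3 - real k * pi / 3) = sqrt 3 / 2" by (simp only: sin_60)
  then show ?thesis unfolding ray_dir_def sin_diff by (simp add: mult.commute)
qed

lemma bisector_dir_eq: "bisector_dir i = (snd (ray_dir (Suc i)), - fst (ray_dir (Suc i)))"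
proof -
  have e: "real (Suc i) * pi / 3 = (2 * real i - 1) * pi / 6 + pi / 2" by (simp add: field_simps)
  show ?thesis unfolding ray_dir_def bisector_dir_def e by (simp add: sin_add cos_add)
qed

definition hex_coord :: "nat \<Rightarrow> point \<Rightarrow> real" where
  "hex_coord k p = fst p * snd (ray_dir k) - snd p * fst (ray_dir k)"

lemma hex_coord_add3: "hex_coord (k + 3) p = - hex_coord k p"
  by (simp add: hex_coord_def ray_dir_add3)

lemma hex_coord_Suc: "hex_coord (Suc k) p = hex_coord k p + hex_coord (k + 2) p"
  by (simp add: hex_coord_def ray_dir_Suc [of k] algebra_simps)

lemma proj_dist_eq: "proj_dist i p q = hex_coord (Suc i) q - hex_coord (Suc i) p"
  by (simp add: proj_dist_def hex_coord_def bisector_dir_eq algebra_simps)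

lemma mem_cone_Suc_iff:
  "q \<in> cone (Suc k) p \<longleftrightarrow>
     hex_coord (Suc k) p \<le> hex_coord (Suc k) q \<and> hex_coord k q \<le> hex_coord k p"
proof -
  obtain c1 s1 where u: "ray_dir k = (c1, s1)" by force
  obtain c2 s2 where v: "ray_dir (Suc k) = (c2, s2)" by force
  define s where "s = sqrt 3 / 2"
  have s: "c1 * s2 - s1 * c2 = s" "s > 0" using ray_dir_Suc_cross [of k] by (simp_all add: u v s_def)
  define dx dy where "dx = fst q - fst p" and "dy = snd q - snd p"
  have "q \<in> cone (Suc k) p \<longleftrightarrow> (\<exists>a b. a \<ge> 0 \<and> b \<ge> 0 \<and> dx = a * c1 + b * c2 \<and> dy = a * s1 + b * s2)"
    unfolding cone_def dx_def dy_def by (cases p; cases q) (auto simp: u v algebra_simps)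
  also have "\<dots> \<longleftrightarrow> 0 \<le> dx * s2 - dy * c2 \<and> dx * s1 - dy * c1 \<le> 0"
  proof
    assume "\<exists>a b. a \<ge> 0 \<and> b \<ge> 0 \<and> dx = a * c1 + b * c2 \<and> dy = a * s1 + b * s2"
    then obtain a b where ab: "a \<ge> 0" "b \<ge> 0" "dx = a * c1 + b * c2" "dy = a * s1 + b * s2" by blast
    have "dx * s2 - dy * c2 = a * s" "dx * s1 - dy * c1 = - b * s"
      using s(1) by (simp_all add: ab algebra_simps)
    then show "0 \<le> dx * s2 - dy * c2 \<and> dx * s1 - dy * c1 \<le> 0" using ab s(2) by simp
  next
    assume h: "0 \<le> dx * s2 - dy * c2 \<and> dx * s1 - dy * c1 \<le> 0"
    \<comment> \<open>Cramer's rule for the basis of the two boundary rays\<close>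
    define a b where "a = (dx * s2 - dy * c2) / s" and "b = - (dx * s1 - dy * c1) / s"
    have "a * s = dx * s2 - dy * c2" "b * s = dy * c1 - dx * s1"
      using s(2) by (simp_all add: a_def b_def)
    then have "dx * s = (a * c1 + b * c2) * s" "dy * s = (a * s1 + b * s2) * s"
      using s(1) by algebra+
    then have "dx = a * c1 + b * c2" "dy = a * s1 + b * s2"
      using s(2) by simp_all
    moreover have "a \<ge> 0" "b \<ge> 0" using h s(2) by (simp_all add: a_def b_def)
    ultimately show "\<exists>a b. a \<ge> 0 \<and> b \<ge> 0 \<and> dx = a * c1 + b * c2 \<and> dy = a * s1 + b * s2" by blast
  qed
  finally show ?thesis by (simp add: hex_coord_def u v dx_def dy_def algebra_simps)
qed

lemma nat_sign_change:
  fixes f :: "nat \<Rightarrow> 'a::{zero,linorder}"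
  assumes "f a \<le> 0" "0 \<le> f b" "a < b"
  shows "\<exists>k. a \<le> k \<and> k < b \<and> f k \<le> 0 \<and> 0 \<le> f (Suc k)"
  using assms
proof (induction b)
  case 0
  then show ?case by simp
next
  case (Suc b)
  show ?case
  proof (cases "f b \<le> 0")
    case True
    then show ?thesis using Suc.prems by (intro exI [of _ b]) auto
  next
    case False
    then have "a < b" using Suc.prems(1,3) by (metis less_Suc_eq)
    then show ?thesis using Suc.IH Suc.prems(1) False by (meson le_cases less_SucI)
  qed
qed

lemma cones_cover: "\<exists>k<6. q \<in> cone (Suc k) p"
proof -
  define s where "s j = hex_coord j q - hex_coord j p" for j
  have s3: "s (j + 3) = - s j" for j by (simp add: s_def hex_coord_add3)
  have "\<exists>k<6. s k \<le> 0 \<and> 0 \<le> s (Suc k)"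
  proof (cases "s 0 \<le> 0")
    case True
    moreover have "0 \<le> s 3" using True s3 [of 0] by simp
    ultimately obtain k where "k < 3" "s k \<le> 0" "0 \<le> s (Suc k)"
      using nat_sign_change [of s 0 3] by auto
    then show ?thesis by (intro exI [of _ k]) simp
  next
    case False
    have "s 3 \<le> 0" "0 \<le> s 6" using False s3 [of 0] s3 [of 3] by simp_all
    then obtain k where "k < 6" "s k \<le> 0" "0 \<le> s (Suc k)"
      using nat_sign_change [of s 3 6] by auto
    then show ?thesis by blast
  qed
  then show ?thesis by (auto simp: mem_cone_Suc_iff s_def)
qed

lemma hex_coord_eq_imp_parallel:
  assumes "hex_coord k q = hex_coord k p"
  shows "\<exists>t. (fst q - fst p, snd q - snd p) = (t * fst (ray_dir k), t * snd (ray_dir k))"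
proof -
  obtain c s where u: "ray_dir k = (c, s)" by force
  have "(fst (ray_dir k))\<^sup>2 + (snd (ray_dir k))\<^sup>2 = 1" by (simp add: ray_dir_def)
  then have unit: "c\<^sup>2 + s\<^sup>2 = 1" by (simp add: u)
  define dx dy where "dx = fst q - fst p" and "dy = snd q - snd p"
  have cross0: "dx * s - dy * c = 0" using assms by (simp add: hex_coord_def u dx_def dy_def algebra_simps)
  have "dx = (dx * c + dy * s) * c" "dy = (dx * c + dy * s) * s"
    using cross0 unit by algebra+
  then show ?thesis by (simp add: u dx_def [symmetric] dy_def [symmetric]) blast
qed

lemma hex_coord_inj_on:
  assumes "general_position P"
  shows "inj_on (hex_coord k) P"
proof (induction k rule: less_induct)
  case (less k)
  show ?case
  proof (cases "k < 3")
    case True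
    show ?thesis
    proof (rule inj_onI, rule ccontr)
      fix p q assume "p \<in> P" "q \<in> P" "hex_coord k p = hex_coord k q" "p \<noteq> q"
      then show False
        using hex_coord_eq_imp_parallel [of k q p] assms True
        unfolding general_position_def by (auto simp: eval_nat_numeral less_Suc_eq)
    qed
  next
    case False
    then have "hex_coord k = (\<lambda>p. - hex_coord (k - 3) p)"
      using hex_coord_add3 [of "k - 3"] by fastforce
    then show ?thesis using less.IH [of "k - 3"] False by (simp add: inj_on_def)
  qed
qed

definition hex_dist :: "point \<Rightarrow> point \<Rightarrow> real" where
  "hex_dist p q = max (max \<bar>hex_coord 0 q - hex_coord 0 p\<bar> \<bar>hex_coord 1 q - hex_coord 1 p\<bar>)
     \<bar>hex_coord 2 q - hex_coord 2 p\<bar>"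

lemma hex_dist_commute: "hex_dist p q = hex_dist q p"
  by (simp add: hex_dist_def abs_minus_commute)

lemma hex_dist_shift:
  "hex_dist p q = max (max \<bar>hex_coord k q - hex_coord k p\<bar> \<bar>hex_coord (k + 1) q - hex_coord (k + 1) p\<bar>)
     \<bar>hex_coord (k + 2) q - hex_coord (k + 2) p\<bar>"
proof (induction k)
  case 0
  then show ?case by (simp add: hex_dist_def numeral_2_eq_2)
next
  case (Suc k)
  have "hex_coord (Suc k + 2) = (\<lambda>p. - hex_coord k p)"
    using hex_coord_add3 [of k] by (simp add: fun_eq_iff eval_nat_numeral)
  then show ?case using Suc.IH by (simp add: abs_minus_commute max.commute max.left_commute)
qed

section \<open>Arcs of the Theta6 graph\<close>

definition nearest_in_cone :: "point set \<Rightarrow> nat \<Rightarrow> point \<Rightarrow> point \<Rightarrow> bool" where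
  "nearest_in_cone P i p q \<longleftrightarrow> q \<in> cone i p \<inter> (P - {p}) \<and>
     (\<forall>r \<in> cone i p \<inter> (P - {p}). proj_dist i p q \<le> proj_dist i p r)"

definition cone_arcs :: "point set \<Rightarrow> nat \<Rightarrow> (point \<times> point) set" where
  "cone_arcs P i = {(p, q). p \<in> P \<and> nearest_in_cone P i p q}"

definition theta6_arcs :: "point set \<Rightarrow> (point \<times> point) set" where
  "theta6_arcs P = (\<Union>k<6. cone_arcs P (Suc k))"

lemma mem_theta6_arcs_iff:
  "(p, q) \<in> theta6_arcs P \<longleftrightarrow> p \<in> P \<and> (\<exists>i\<in>{1..6}. nearest_in_cone P i p q)"
proof -
  have "{1..6} = Suc ` {..<6::nat}" by (simp add: atLeastAtMostSuc_conv numeral_eq_Suc lessThan_Suc)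
  then show ?thesis by (auto simp: theta6_arcs_def cone_arcs_def)
qed

lemma theta6_arcs_subset: "theta6_arcs P \<subseteq> P \<times> P"
  by (auto simp: theta6_arcs_def cone_arcs_def nearest_in_cone_def)

lemma theta6_arcs_irrefl: "(p, q) \<in> theta6_arcs P \<Longrightarrow> p \<noteq> q"
  by (auto simp: theta6_arcs_def cone_arcs_def nearest_in_cone_def)

lemma theta6_edges_eq_image: "theta6_edges P = (\<lambda>(p, q). {p, q}) ` theta6_arcs P"
proof -
  have "theta6_edges P = {{p, q} | p q. (p, q) \<in> theta6_arcs P}"
    by (simp only: theta6_edges_def mem_theta6_arcs_iff nearest_in_cone_def)
  then show ?thesis by auto
qed

lemma card_cone_arcs_le:
  assumes fin: "finite P" and gp: "general_position P"
  shows "card (cone_arcs P (Suc k)) + card (maximal_points P (hex_coord (Suc k)) (\<lambda>p. - hex_coord k p))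
    \<le> card P"
proof -
  let ?M = "maximal_points P (hex_coord (Suc k)) (\<lambda>p. - hex_coord k p)"
  have unique: "q = q'" if "(p, q) \<in> cone_arcs P (Suc k)" "(p, q') \<in> cone_arcs P (Suc k)" for p q q'
  proof -
    have "proj_dist (Suc k) p q = proj_dist (Suc k) p q'" "q \<in> P" "q' \<in> P"
      using that unfolding cone_arcs_def nearest_in_cone_def by (auto intro: order_antisym)
    then show "q = q'"
      using hex_coord_inj_on [OF gp, of "Suc (Suc k)"] by (auto simp: proj_dist_eq dest: inj_onD)
  qed
  have "inj_on fst (cone_arcs P (Suc k))"
    using unique by (auto simp: inj_on_def)
  moreover have "fst ` cone_arcs P (Suc k) \<subseteq> P - ?M"
    by (force simp: cone_arcs_def nearest_in_cone_def maximal_points_def mem_cone_Suc_iff)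
  ultimately have "card (cone_arcs P (Suc k)) \<le> card (P - ?M)"
    using fin by (metis card_image card_mono finite_Diff)
  moreover have "card (P - ?M) = card P - card ?M"
    using finite_subset [OF maximal_points_subset fin]
    by (rule card_Diff_subset) (rule maximal_points_subset)
  moreover have "card ?M \<le> card P" using card_mono [OF fin maximal_points_subset] .
  ultimately show ?thesis by linarith
qed

lemma card_maximal_points_alternate_cones:
  assumes fin: "finite P" and three: "card P \<ge> 3" and gp: "general_position P"
  shows "6 \<le> card (maximal_points P (hex_coord (Suc j)) (\<lambda>p. - hex_coord j p))
    + card (maximal_points P (hex_coord (Suc (j + 2))) (\<lambda>p. - hex_coord (j + 2) p))
    + card (maximal_points P (hex_coord (Suc (j + 4))) (\<lambda>p. - hex_coord (j + 4) p))"
proof -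
  have "Suc (j + 2) = j + 3" "j + 4 = Suc j + 3" "Suc (j + 4) = (j + 2) + 3" by simp_all
  then have shift: "hex_coord (Suc (j + 2)) = (\<lambda>p. - hex_coord j p)"
    "hex_coord (j + 4) = (\<lambda>p. - hex_coord (Suc j) p)"
    "hex_coord (Suc (j + 4)) = (\<lambda>p. - hex_coord (j + 2) p)"
    by (simp_all only: fun_eq_iff hex_coord_add3) simp_all
  have "\<forall>p\<in>P. hex_coord (Suc j) p + - hex_coord j p + - hex_coord (j + 2) p = 0"
    using hex_coord_Suc [of j] by simp
  moreover have "inj_on (hex_coord i) P" "inj_on (\<lambda>p. - hex_coord i p) P" for i
    using hex_coord_inj_on [OF gp, of i] by (simp_all add: inj_on_def)
  ultimately show ?thesis
    unfolding shift minus_minus by (intro card_maximal_points_cyclic_sum [OF fin three]) simp_all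
qed

lemma card_theta6_arcs:
  assumes fin: "finite P" and three: "card P \<ge> 3" and gp: "general_position P"
  shows "card (theta6_arcs P) + 12 \<le> 6 * card P"
proof -
  define m where "m k = card (maximal_points P (hex_coord (Suc k)) (\<lambda>p. - hex_coord k p))" for k
  have alternate: "6 \<le> m j + m (j + 2) + m (j + 4)" for j
    unfolding m_def by (rule card_maximal_points_alternate_cones [OF fin three gp])
  have "card (theta6_arcs P) \<le> (\<Sum>k<6. card (cone_arcs P (Suc k)))"
    unfolding theta6_arcs_def by (rule card_UN_le) simp
  moreover have "(\<Sum>k<6. card (cone_arcs P (Suc k))) + (\<Sum>k<6. m k) \<le> (\<Sum>k<6::nat. card P)"
    unfolding sum.distrib [symmetric] m_def by (intro sum_mono card_cone_arcs_le [OF fin gp])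
  moreover have "(\<Sum>k<6. m k) = (m 0 + m 2 + m 4) + (m 1 + m 3 + m 5)"
    by (simp add: lessThan_nat_numeral)
  moreover have "6 \<le> m 0 + m 2 + m 4" "6 \<le> m 1 + m 3 + m 5"
    using alternate [of 0] alternate [of 1] by (simp_all add: numeral_eq_Suc)
  ultimately show ?thesis by simp
qed

text \<open>A point \<open>r\<close> of the cone with smaller projection than \<open>q\<close> would be strictly closer in
  hexagonal distance both to \<open>p\<close> and to \<open>q\<close>.\<close>
lemma arc_if_hex_closest:
  assumes gp: "general_position P" and pq: "p \<in> P" "q \<in> P" "p \<noteq> q"
    and closest: "\<forall>r\<in>P. hex_dist p q \<le> hex_dist p r \<or> hex_dist p q \<le> hex_dist r q"
  shows "(p, q) \<in> theta6_arcs P"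
proof -
  obtain k where k: "k < 6" "q \<in> cone (Suc k) p" using cones_cover by blast
  have "proj_dist (Suc k) p q \<le> proj_dist (Suc k) p r" if r: "r \<in> cone (Suc k) p \<inter> (P - {p})" for r
  proof (rule ccontr)
    assume closer: "\<not> proj_dist (Suc k) p q \<le> proj_dist (Suc k) p r"
    define u v x y where "u = hex_coord (Suc k) r - hex_coord (Suc k) p"
      and "v = hex_coord k p - hex_coord k r" and "x = hex_coord (Suc k) q - hex_coord (Suc k) p"
      and "y = hex_coord k p - hex_coord k q"
    have "u \<ge> 0" "v \<ge> 0" "x \<ge> 0" "y \<ge> 0"
      using r k(2) by (simp_all add: mem_cone_Suc_iff u_def v_def x_def y_def)
    moreover have "u \<noteq> 0" "v \<noteq> 0"
      using r pq(1) hex_coord_inj_on [OF gp, of k] hex_coord_inj_on [OF gp, of "Suc k"]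
      by (auto simp: u_def v_def dest: inj_onD)
    moreover have "u + v < x + y"
      using closer hex_coord_Suc [of k] by (simp add: proj_dist_eq u_def v_def x_def y_def)
    moreover have "hex_dist p r = max (max \<bar>v\<bar> \<bar>u\<bar>) \<bar>u + v\<bar>"
      "hex_dist p q = max (max \<bar>y\<bar> \<bar>x\<bar>) \<bar>x + y\<bar>"
      "hex_dist r q = max (max \<bar>y - v\<bar> \<bar>x - u\<bar>) \<bar>(x + y) - (u + v)\<bar>"
      using hex_coord_Suc [of k]
      by (simp_all add: hex_dist_shift [of _ _ k] u_def v_def x_def y_def abs_minus_commute algebra_simps)
    ultimately have "hex_dist p r < hex_dist p q" "hex_dist r q < hex_dist p q"
      by (simp_all add: max_def abs_if)
    then show False using closest r by fastforce
  qed
  then show ?thesis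
    using k pq unfolding theta6_arcs_def cone_arcs_def nearest_in_cone_def by blast
qed

lemma mutual_arcs_across_cut:
  assumes fin: "finite P" and gp: "general_position P"
    and S: "S \<subseteq> P" "S \<noteq> {}" "P - S \<noteq> {}"
  obtains p q where "p \<in> S" "q \<in> P - S" "(p, q) \<in> theta6_arcs P" "(q, p) \<in> theta6_arcs P"
proof -
  have "finite (S \<times> (P - S))" using finite_subset [OF S(1) fin] fin by simp
  moreover have "S \<times> (P - S) \<noteq> {}" using S by simp
  ultimately
  obtain m where "is_arg_min (\<lambda>(a, b). hex_dist a b) (\<lambda>m. m \<in> S \<times> (P - S)) m"
    using ex_is_arg_min_if_finite by blast
  moreover obtain p q where "m = (p, q)" by (cases m)
  ultimately have pq: "(p, q) \<in> S \<times> (P - S)"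
    and min: "\<forall>(a, b) \<in> S \<times> (P - S). hex_dist p q \<le> hex_dist a b"
    unfolding is_arg_min_linorder by auto
  have "p \<in> P" "q \<in> P" "p \<noteq> q" using pq S(1) by auto
  moreover have "hex_dist p q \<le> hex_dist p r \<or> hex_dist p q \<le> hex_dist r q" if "r \<in> P" for r
    using min pq that by (cases "r \<in> S") auto
  ultimately have "(p, q) \<in> theta6_arcs P" "(q, p) \<in> theta6_arcs P"
    using arc_if_hex_closest [OF gp] hex_dist_commute by metis+
  with pq that show thesis by blast
qed

theorem corollary2:
  fixes P :: "point set" and n :: nat
  assumes "finite P" and "card P = n" and "n \<ge> 3" and "general_position P"
  shows "card (theta6_edges P) \<le> 5 * n - 11"
proof -
  define mutual where "mutual = {{p, q} | p q. (p, q) \<in> theta6_arcs P \<and> (q, p) \<in> theta6_arcs P}"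
  have fin_arcs: "finite (theta6_arcs P)"
    using finite_subset [OF theta6_arcs_subset] assms(1) by simp
  have mutual_sub: "mutual \<subseteq> (\<lambda>(p, q). {p, q}) ` theta6_arcs P"
    unfolding mutual_def by force
  have "card (theta6_edges P) + card mutual \<le> card (theta6_arcs P)"
    unfolding theta6_edges_eq_image
  proof (rule card_image_add_card_double_fibres [OF fin_arcs mutual_sub])
    fix e assume "e \<in> mutual"
    then obtain p q where "e = {p, q}" "(p, q) \<in> theta6_arcs P" "(q, p) \<in> theta6_arcs P" "p \<noteq> q"
      unfolding mutual_def using theta6_arcs_irrefl by blast
    then have "{(p, q), (q, p)} \<subseteq> {a \<in> theta6_arcs P. (\<lambda>(p, q). {p, q}) a = e}" by auto
    from card_mono [OF _ this] show "2 \<le> card {a \<in> theta6_arcs P. (\<lambda>(p, q). {p, q}) a = e}"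
      using fin_arcs \<open>p \<noteq> q\<close> by simp
  qed
  moreover have "card P - 1 \<le> card mutual"
  proof (rule card_edges_ge_if_cuts_crossed [OF assms(1)])
    show "finite mutual" using finite_subset [OF mutual_sub] fin_arcs by simp
    fix S assume "S \<subseteq> P" "S \<noteq> {}" "P - S \<noteq> {}"
    then obtain p q where "p \<in> S" "q \<in> P - S" "(p, q) \<in> theta6_arcs P" "(q, p) \<in> theta6_arcs P"
      by (rule mutual_arcs_across_cut [OF assms(1,4)])
    then show "\<exists>p\<in>S. \<exists>q\<in>P - S. {p, q} \<in> mutual"
      unfolding mutual_def by blast
  qed
  moreover have "card (theta6_arcs P) + 12 \<le> 6 * n" using card_theta6_arcs assms by blast
  ultimately show ?thesis using assms(2,3) by linarith
qed

end
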